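(* Let $n\ge2$, let $a=(a_1,\dots,a_n)$ and $b=(b_1,\dots,b_n)$ be real sequences, and let $t=(t_1,\dots,t_n)\in T_a\cap T_b$. Let $p=(p_1,\dots,p_n)\in[0,\infty)^n$ with at least two $p_i$ positive (so that $S_{n,p}(t,t)>0$). Then $$S_{n,p}(a,b)\ge \frac{S_{n,p}(a,t)\,S_{n,p}(b,t)}{S_{n,p}(t,t)}.$$
   Context: For a real sequence $(x_i)$, $\Delta x_i=x_{i+1}-x_i$. "Increasing" means strictly increasing. For a real sequence $a=(a_i)_{i=1}^n$, $T_a$ denotes the set of increasing real sequences $(t_i)_{i=1}^n$ such that $(\Delta a_i/\Delta t_i)_{i=1}^{n-1}$ is non-decreasing. For $p\in[0,\infty)^n$ with $P_n=\sum_{i=1}^n p_i>0$ and $x,y\in\mathbb{R}^n$: $M_{n,p}(x)=\frac1{P_n}\sum_{i=1}^n p_ix_i$, $xy=(x_1y_1,\dots,x_ny_n)$, and $S_{n,p}(x,y)=M_{n,p}(xy)-M_{n,p}(x)M_{n,p}(y)$. *)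

theory Defs
  imports Complex_Main
begin

(* Sequences x = (x_1,...,x_n) are represented as functions nat => real; only
   indices 1..n matter. Delta x_i = x (i+1) - x i. *)

definition fdiff :: "(nat \<Rightarrow> real) \<Rightarrow> nat \<Rightarrow> real" where
  "fdiff x i = x (Suc i) - x i"

definition increasing_seq :: "nat \<Rightarrow> (nat \<Rightarrow> real) \<Rightarrow> bool" where
  "increasing_seq n t \<longleftrightarrow> (\<forall>i. 1 \<le> i \<and> i < n \<longrightarrow> t i < t (Suc i))"

definition T_set :: "nat \<Rightarrow> (nat \<Rightarrow> real) \<Rightarrow> (nat \<Rightarrow> real) set" where
  "T_set n a = {t. increasing_seq n t \<and>
     (\<forall>i j. 1 \<le> i \<and> i \<le> j \<and> j \<le> n - 1 \<longrightarrow>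
        fdiff a i / fdiff t i \<le> fdiff a j / fdiff t j)}"

definition M :: "nat \<Rightarrow> (nat \<Rightarrow> real) \<Rightarrow> (nat \<Rightarrow> real) \<Rightarrow> real" where
  "M n p x = (\<Sum>i=1..n. p i * x i) / (\<Sum>i=1..n. p i)"

definition S :: "nat \<Rightarrow> (nat \<Rightarrow> real) \<Rightarrow> (nat \<Rightarrow> real) \<Rightarrow> (nat \<Rightarrow> real) \<Rightarrow> real" where
  "S n p x y = M n p (\<lambda>i. x i * y i) - M n p x * M n p y"

end

theory Submission
  imports Defs
begin

text \<open>Let \<open>l = S(a,t)/S(t,t)\<close> and \<open>c = a - l t\<close>, so that \<open>S(c,t) = 0\<close> and the claim becomes
  \<open>S(c,b) \<ge> 0\<close>. Both \<open>c\<close> and \<open>b\<close> are convex as functions of \<open>t\<close>, so the indices where \<open>c\<close>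
  lies below its mean form an interval, and a chord of \<open>b\<close> gives a line \<open>L(t)\<close> with \<open>b - L\<close> of
  the same sign as \<open>c - M c\<close>. As \<open>c\<close> is uncorrelated with constants and with \<open>t\<close>,
  \<open>S(c,b) = S(c, b - L) = \<Sum> p\<^sub>i (c\<^sub>i - M c)(b\<^sub>i - L(t\<^sub>i)) / P \<ge> 0\<close>.\<close>

text \<open>The chord-slope inequality \<open>(d j - d i)/(t j - t i) \<le> (d k - d j)/(t k - t j)\<close>,
  cross-multiplied.\<close>
definition t_convex :: "nat \<Rightarrow> (nat \<Rightarrow> real) \<Rightarrow> (nat \<Rightarrow> real) \<Rightarrow> bool" where
  "t_convex n t d \<longleftrightarrow> (\<forall>i j k. 1 \<le> i \<and> i < j \<and> j < k \<and> k \<le> n \<longrightarrow>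
      (d j - d i) * (t k - t j) \<le> (d k - d j) * (t j - t i))"

lemma fdiff_telescope: "i \<le> j \<Longrightarrow> (\<Sum>m=i..<j. fdiff d m) = d j - d i"
  unfolding fdiff_def by (rule sum_Suc_diff')

lemma increasing_seq_strict_mono:
  assumes "increasing_seq n t" "1 \<le> i" "i < j" "j \<le> n"
  shows "t i < t j"
proof -
  have "0 < (\<Sum>m=i..<j. fdiff t m)"
    using assms by (intro sum_pos) (auto simp: increasing_seq_def fdiff_def)
  then show ?thesis using fdiff_telescope[of i j t] assms(3) by simp
qed

lemma diff_le_slope_mult:
  assumes "i \<le> j" "\<And>m. i \<le> m \<Longrightarrow> m < j \<Longrightarrow> fdiff d m \<le> \<sigma> * fdiff t m"
  shows "d j - d i \<le> \<sigma> * (t j - t i)"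
proof -
  have "(\<Sum>m=i..<j. fdiff d m) \<le> (\<Sum>m=i..<j. \<sigma> * fdiff t m)"
    using assms(2) by (intro sum_mono) auto
  then show ?thesis by (simp add: fdiff_telescope[OF assms(1)] flip: sum_distrib_left)
qed

lemma diff_ge_slope_mult:
  assumes "i \<le> j" "\<And>m. i \<le> m \<Longrightarrow> m < j \<Longrightarrow> \<sigma> * fdiff t m \<le> fdiff d m"
  shows "\<sigma> * (t j - t i) \<le> d j - d i"
proof -
  have "(\<Sum>m=i..<j. \<sigma> * fdiff t m) \<le> (\<Sum>m=i..<j. fdiff d m)"
    using assms(2) by (intro sum_mono) auto
  then show ?thesis by (simp add: fdiff_telescope[OF assms(1)] flip: sum_distrib_left)
qed

text \<open>The chord over \<open>[i, j]\<close> has slope at most the last step slope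
  \<open>\<epsilon> (j - 1)\<close>, and the chord over \<open>[j, k]\<close> has slope at least \<open>\<epsilon> j\<close>.\<close>
lemma T_set_imp_t_convex:
  assumes "t \<in> T_set n d"
  shows "t_convex n t d"
  unfolding t_convex_def
proof (intro allI impI)
  fix i j k assume ijk: "1 \<le> i \<and> i < j \<and> j < k \<and> k \<le> n"
  define \<epsilon> where "\<epsilon> m = fdiff d m / fdiff t m" for m
  have inc: "increasing_seq n t"
    and slopes_mono: "\<And>i j. 1 \<le> i \<Longrightarrow> i \<le> j \<Longrightarrow> j \<le> n - 1 \<Longrightarrow> \<epsilon> i \<le> \<epsilon> j"
    using assms unfolding T_set_def \<epsilon>_def by auto
  have step_pos: "fdiff t m > 0" if "1 \<le> m" "m < n" for m
    using inc that unfolding increasing_seq_def fdiff_def by auto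
  have step_eq: "fdiff d m = \<epsilon> m * fdiff t m" if "1 \<le> m" "m < n" for m
    using step_pos[OF that] unfolding \<epsilon>_def by simp
  have left: "d j - d i \<le> \<epsilon> (j - 1) * (t j - t i)"
    using ijk slopes_mono[of _ "j - 1"] step_eq step_pos
    by (intro diff_le_slope_mult) (auto intro!: mult_right_mono)
  have right: "\<epsilon> j * (t k - t j) \<le> d k - d j"
    using ijk slopes_mono[of j] step_eq step_pos
    by (intro diff_ge_slope_mult) (auto intro!: mult_right_mono)
  have "\<epsilon> (j - 1) \<le> \<epsilon> j" using ijk slopes_mono[of "j - 1" j] by auto
  moreover have "0 \<le> t j - t i" "0 \<le> t k - t j"
    using ijk increasing_seq_strict_mono[OF inc] by (auto intro: less_imp_le)
  ultimately have "(d j - d i) * (t k - t j) \<le> (\<epsilon> j * (t j - t i)) * (t k - t j)"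
    using left by (meson dual_order.trans mult_right_mono)
  also have "\<dots> = (\<epsilon> j * (t k - t j)) * (t j - t i)" by simp
  also have "\<dots> \<le> (d k - d j) * (t j - t i)"
    using right \<open>0 \<le> t j - t i\<close> by (rule mult_right_mono)
  finally show "(d j - d i) * (t k - t j) \<le> (d k - d j) * (t j - t i)" .
qed

lemma t_convex_diff_linear:
  assumes "t_convex n t d"
  shows "t_convex n t (\<lambda>i. d i - l * t i)"
proof -
  have "(d j - l * t j - (d i - l * t i)) * (t k - t j) - (d k - l * t k - (d j - l * t j)) * (t j - t i)
      = (d j - d i) * (t k - t j) - (d k - d j) * (t j - t i)" for i j k
    by (simp add: algebra_simps)
  then show ?thesis using assms unfolding t_convex_def by smt
qed

context
  fixes n :: nat and t d :: "nat \<Rightarrow> real" and r s :: nat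
  assumes convex: "t_convex n t d"
    and mono: "\<And>i j. 1 \<le> i \<Longrightarrow> i < j \<Longrightarrow> j \<le> n \<Longrightarrow> t i < t j"
    and rs: "1 \<le> r" "r < s" "s \<le> n"
begin

definition chord_slope :: real where
  "chord_slope = (d s - d r) / (t s - t r)"

lemma chord_gap_pos: "0 < t s - t r"
  using mono[OF rs] by simp

lemma chord_slope_scaled: "chord_slope * x * (t s - t r) = (d s - d r) * x"
  using chord_gap_pos unfolding chord_slope_def by simp

lemma t_convex_below_chord:
  assumes "r \<le> i" "i \<le> s"
  shows "d i \<le> d r + chord_slope * (t i - t r)"
proof (cases "i = r \<or> i = s")
  case True
  then show ?thesis using chord_slope_scaled[of 1] chord_gap_pos by auto
next
  case False
  with assms have "(d i - d r) * (t s - t i) \<le> (d s - d i) * (t i - t r)"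
    using convex rs unfolding t_convex_def by auto
  then have "(d i - d r) * (t s - t r) \<le> (d s - d r) * (t i - t r)"
    by (simp add: algebra_simps)
  also have "\<dots> = (chord_slope * (t i - t r)) * (t s - t r)"
    by (simp add: chord_slope_scaled)
  finally show ?thesis using chord_gap_pos by simp
qed

lemma t_convex_above_chord:
  assumes "1 \<le> i" "i \<le> n" "i \<le> r \<or> s \<le> i"
  shows "d r + chord_slope * (t i - t r) \<le> d i"
proof -
  consider "i = r \<or> i = s" | "i < r" | "s < i" using assms(3) by linarith
  then show ?thesis
  proof cases
    case 1
    then show ?thesis using chord_slope_scaled[of 1] chord_gap_pos by auto
  next
    case 2
    then have "(d r - d i) * (t s - t r) \<le> (d s - d r) * (t r - t i)"
      using convex rs assms unfolding t_convex_def by auto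
    then have "(d r - d i) * (t s - t r) \<le> (chord_slope * (t r - t i)) * (t s - t r)"
      by (simp add: chord_slope_scaled)
    then have "d r - d i \<le> chord_slope * (t r - t i)"
      using chord_gap_pos by simp
    then show ?thesis by (simp add: algebra_simps)
  next
    case 3
    then have "(d s - d r) * (t i - t s) \<le> (d i - d s) * (t s - t r)"
      using convex rs assms unfolding t_convex_def by auto
    then have "(chord_slope * (t i - t s)) * (t s - t r) \<le> (d i - d s) * (t s - t r)"
      by (simp add: chord_slope_scaled)
    then have "chord_slope * (t i - t s) \<le> d i - d s"
      using chord_gap_pos by simp
    moreover have "chord_slope * (t s - t r) = d s - d r" using chord_slope_scaled[of 1] by simp
    ultimately show ?thesis by (simp add: algebra_simps)
  qed
qed

end

lemma t_convex_sublevel_interval: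
  assumes convex: "t_convex n t c"
    and mono: "\<And>i j. 1 \<le> i \<Longrightarrow> i < j \<Longrightarrow> j \<le> n \<Longrightarrow> t i < t j"
    and "1 \<le> r" "r \<le> i" "i \<le> k" "k \<le> n" "c r < m" "c k < m"
  shows "c i < m"
proof (rule ccontr)
  assume "\<not> c i < m"
  with assms have "r < i" "i < k" by (metis le_neq_implies_less)+
  then have "(c i - c r) * (t k - t i) \<le> (c k - c i) * (t i - t r)"
    using convex assms unfolding t_convex_def by auto
  moreover have "0 < (c i - c r) * (t k - t i)" "(c k - c i) * (t i - t r) < 0"
    using \<open>\<not> c i < m\<close> assms \<open>r < i\<close> \<open>i < k\<close> mono[of r i] mono[of i k]
    by (auto intro!: mult_pos_pos mult_neg_pos)
  ultimately show False by linarith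
qed

lemma order_convex_within_proper_interval:
  fixes N :: "nat set"
  assumes "N \<subseteq> {1..n}" "N \<noteq> {}" "2 \<le> n"
    and between: "\<And>i j k. i \<in> N \<Longrightarrow> k \<in> N \<Longrightarrow> i \<le> j \<Longrightarrow> j \<le> k \<Longrightarrow> j \<in> N"
  obtains r s where "1 \<le> r" "r < s" "s \<le> n" "N \<subseteq> {r..s}"
    "\<And>i. r \<le> i \<Longrightarrow> i \<le> s \<Longrightarrow> i \<notin> N \<Longrightarrow> i = r \<or> i = s"
proof -
  have fin: "finite N" using assms(1) finite_subset by blast
  define r s where "r = Min N" and "s = Max N"
  have ends: "r \<in> N" "s \<in> N" and N_sub: "N \<subseteq> {r..s}"
    using fin assms(2) unfolding r_def s_def by auto
  have r1: "1 \<le> r" and rn: "r \<le> n" and sn: "s \<le> n" using ends assms(1) by auto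
  show ?thesis
  proof (cases "r < s")
    case True
    show ?thesis
    proof (rule that[OF r1 True sn N_sub])
      show "i \<notin> N \<Longrightarrow> i = r \<or> i = s" if "r \<le> i" "i \<le> s" for i
        using between[OF ends that] by blast
    qed
  next
    case False
    with ends N_sub have "N = {r}" by fastforce
    show ?thesis
    proof (cases "r < n")
      case True
      then show ?thesis using that[of r "Suc r"] \<open>N = {r}\<close> r1 by auto
    next
      case False
      then show ?thesis using that[of "r - 1" r] \<open>N = {r}\<close> r1 rn assms(3) by auto
    qed
  qed
qed

text \<open>Below the level \<open>m\<close> the values of \<open>c\<close> occupy an interval of indices; the chord of
  \<open>b\<close> over (a proper enlargement of) that interval lies above \<open>b\<close> there and below it elsewhere.\<close>
lemma t_convex_separating_line:
  assumes convex_c: "t_convex n t c" and convex_b: "t_convex n t b"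
    and mono: "\<And>i j. 1 \<le> i \<Longrightarrow> i < j \<Longrightarrow> j \<le> n \<Longrightarrow> t i < t j" and "2 \<le> n"
  obtains \<alpha> \<beta> where "\<And>i. i \<in> {1..n} \<Longrightarrow> 0 \<le> (c i - m) * (b i - \<alpha> - \<beta> * t i)"
proof (cases "\<forall>i\<in>{1..n}. m \<le> c i")
  case True
  have "0 \<le> (c i - m) * (b i - Min (b ` {1..n}) - 0 * t i)" if "i \<in> {1..n}" for i
    using True that by (intro mult_nonneg_nonneg) auto
  then show ?thesis using that by blast
next
  case False
  then obtain i0 where "i0 \<in> {1..n}" "c i0 < m" by (auto simp: not_le)
  define N where "N = {i\<in>{1..n}. c i < m}"
  have N_between: "j \<in> N" if "i \<in> N" "k \<in> N" "i \<le> j" "j \<le> k" for i j k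
    using t_convex_sublevel_interval[OF convex_c mono, of i j k m] that unfolding N_def by auto
  obtain r s where rs: "1 \<le> r" "r < s" "s \<le> n" and N_sub: "N \<subseteq> {r..s}"
    and gaps: "\<And>i. r \<le> i \<Longrightarrow> i \<le> s \<Longrightarrow> i \<notin> N \<Longrightarrow> i = r \<or> i = s"
  proof (rule order_convex_within_proper_interval[of N n])
    show "N \<subseteq> {1..n}" "N \<noteq> {}"
      using \<open>i0 \<in> {1..n}\<close> \<open>c i0 < m\<close> unfolding N_def by blast+
  qed (use N_between \<open>2 \<le> n\<close> in blast)+
  let ?\<beta> = "chord_slope t b r s"
  have "0 \<le> (c i - m) * (b i - (b r - ?\<beta> * t r) - ?\<beta> * t i)" if i: "i \<in> {1..n}" for i
  proof (cases "c i < m")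
    case True
    then have "b i \<le> b r + ?\<beta> * (t i - t r)"
      using N_sub i t_convex_below_chord[OF convex_b mono rs] unfolding N_def by auto
    then show ?thesis using True by (intro mult_nonpos_nonpos) (auto simp: algebra_simps)
  next
    case False
    then have "i \<notin> N" unfolding N_def by simp
    then have "i \<le> r \<or> s \<le> i" using gaps[of i] by linarith
    then have "b r + ?\<beta> * (t i - t r) \<le> b i"
      using i t_convex_above_chord[OF convex_b mono rs] by simp
    then show ?thesis using False by (intro mult_nonneg_nonneg) (auto simp: algebra_simps)
  qed
  then show ?thesis using that by blast
qed

lemma M_diff_scaled: "M n p (\<lambda>i. x i - l * y i) = M n p x - l * M n p y"
  unfolding M_def
  by (simp add: right_diff_distrib sum_subtractf sum_distrib_left mult.left_commute diff_divide_distrib)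

lemma S_diff_scaled_left: "S n p (\<lambda>i. x i - l * y i) z = S n p x z - l * S n p y z"
proof -
  have distrib: "(\<lambda>i. (x i - l * y i) * z i) = (\<lambda>i. x i * z i - l * (y i * z i))"
    by (auto simp: algebra_simps)
  show ?thesis unfolding S_def M_diff_scaled distrib by (simp add: algebra_simps)
qed

lemma S_commute: "S n p x y = S n p y x"
  unfolding S_def by (simp add: mult.commute)

lemma weighted_deviation_sum_eq_0:
  assumes "(\<Sum>i=1..n. p i) \<noteq> 0"
  shows "(\<Sum>i=1..n. p i * (x i - M n p x)) = 0"
proof -
  have "(\<Sum>i=1..n. p i * (x i - M n p x)) = (\<Sum>i=1..n. p i * x i) - M n p x * (\<Sum>i=1..n. p i)"
    by (simp add: right_diff_distrib sum_subtractf sum_distrib_left mult.commute)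
  also have "\<dots> = 0" using assms unfolding M_def by simp
  finally show ?thesis .
qed

lemma S_eq_deviation_sum:
  assumes "(\<Sum>i=1..n. p i) \<noteq> 0"
  shows "S n p x y = (\<Sum>i=1..n. p i * (x i - M n p x) * y i) / (\<Sum>i=1..n. p i)"
proof -
  have "(\<Sum>i=1..n. p i * (x i - M n p x) * y i) = (\<Sum>i=1..n. p i * (x i * y i) - M n p x * (p i * y i))"
    by (rule sum.cong) (auto simp: algebra_simps)
  also have "\<dots> = (\<Sum>i=1..n. p i * (x i * y i)) - M n p x * (\<Sum>i=1..n. p i * y i)"
    by (simp add: sum_subtractf sum_distrib_left)
  finally show ?thesis using assms unfolding S_def M_def by (simp add: diff_divide_distrib)
qed

lemma S_self_eq_deviation_square_sum:
  assumes "(\<Sum>i=1..n. p i) \<noteq> 0"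
  shows "S n p x x = (\<Sum>i=1..n. p i * (x i - M n p x)\<^sup>2) / (\<Sum>i=1..n. p i)"
proof -
  have "(\<Sum>i=1..n. p i * (x i - M n p x)\<^sup>2)
      = (\<Sum>i=1..n. p i * (x i - M n p x) * x i - M n p x * (p i * (x i - M n p x)))"
    by (rule sum.cong) (auto simp: algebra_simps power2_eq_square)
  also have "\<dots> = (\<Sum>i=1..n. p i * (x i - M n p x) * x i)"
    using weighted_deviation_sum_eq_0[OF assms] by (simp add: sum_subtractf flip: sum_distrib_left)
  finally show ?thesis using S_eq_deviation_sum[OF assms] by simp
qed

lemma S_self_pos:
  assumes p_nonneg: "\<forall>i\<in>{1..n}. p i \<ge> 0"
    and "i \<in> {1..n}" "j \<in> {1..n}" "p i > 0" "p j > 0" "x i \<noteq> x j"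
  shows "S n p x x > 0"
proof -
  define \<mu> where "\<mu> = M n p x"
  have P: "(\<Sum>k=1..n. p k) > 0"
    using assms by (intro sum_pos2[of _ i]) auto
  have "i \<noteq> j" using assms by auto
  have "0 < p i * (x i - \<mu>)\<^sup>2 + p j * (x j - \<mu>)\<^sup>2"
    using assms by (cases "x i = \<mu>") (auto intro: add_pos_nonneg add_nonneg_pos)
  also have "\<dots> = (\<Sum>k\<in>{i,j}. p k * (x k - \<mu>)\<^sup>2)" using \<open>i \<noteq> j\<close> by simp
  also have "\<dots> \<le> (\<Sum>k=1..n. p k * (x k - \<mu>)\<^sup>2)"
    using assms by (intro sum_mono2) auto
  finally show ?thesis
    using S_self_eq_deviation_square_sum[where x = x] P unfolding \<mu>_def by simp
qed

text \<open>Since \<open>x\<close> is uncorrelated with \<open>t\<close> and with constants, subtracting a line in \<open>t\<close>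
  from \<open>y\<close> does not change \<open>S n p x y\<close>.\<close>
lemma S_nonneg_if_aligned_with_line:
  assumes P: "(\<Sum>i=1..n. p i) > 0" and p_nonneg: "\<forall>i\<in>{1..n}. p i \<ge> 0"
    and uncorrelated: "S n p x t = 0"
    and aligned: "\<And>i. i \<in> {1..n} \<Longrightarrow> 0 \<le> (x i - M n p x) * (y i - \<alpha> - \<beta> * t i)"
  shows "S n p x y \<ge> 0"
proof -
  let ?w = "\<lambda>i. p i * (x i - M n p x)"
  have P0: "(\<Sum>i=1..n. p i) \<noteq> 0" using P by simp
  have wt: "(\<Sum>i=1..n. ?w i * t i) = 0"
    using S_eq_deviation_sum[OF P0, of x t] uncorrelated P0 by simp
  have "(\<Sum>i=1..n. p i * ((x i - M n p x) * (y i - \<alpha> - \<beta> * t i)))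
      = (\<Sum>i=1..n. ?w i * y i - \<alpha> * ?w i - \<beta> * (?w i * t i))"
    by (rule sum.cong) (auto simp: algebra_simps)
  also have "\<dots> = (\<Sum>i=1..n. ?w i * y i)"
    using weighted_deviation_sum_eq_0[OF P0, of x] wt
    by (simp add: sum_subtractf flip: sum_distrib_left)
  finally have "(\<Sum>i=1..n. ?w i * y i) \<ge> 0"
    using p_nonneg aligned by (metis (no_types, lifting) mult_nonneg_nonneg sum_nonneg)
  then show ?thesis using S_eq_deviation_sum[OF P0, of x y] P by simp
qed

theorem theorem4p1:
  fixes n :: nat and a b t p :: "nat \<Rightarrow> real"
  assumes "n \<ge> 2"
    and "t \<in> T_set n a" and "t \<in> T_set n b"
    and "\<forall>i\<in>{1..n}. p i \<ge> 0"
    and "\<exists>i\<in>{1..n}. \<exists>j\<in>{1..n}. i \<noteq> j \<and> p i > 0 \<and> p j > 0"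
  shows "S n p a b \<ge> S n p a t * S n p b t / S n p t t"
proof -
  obtain i j where ij: "i \<in> {1..n}" "j \<in> {1..n}" "i \<noteq> j" "p i > 0" "p j > 0"
    using assms(5) by blast
  have P: "(\<Sum>k=1..n. p k) > 0"
    using ij assms(4) by (intro sum_pos2[of _ i]) auto
  have mono: "\<And>i j. 1 \<le> i \<Longrightarrow> i < j \<Longrightarrow> j \<le> n \<Longrightarrow> t i < t j"
    using assms(2) increasing_seq_strict_mono unfolding T_set_def by blast
  have "t i \<noteq> t j"
    using ij mono[of i j] mono[of j i] by (cases "i < j") auto
  then have Stt: "S n p t t > 0" using S_self_pos assms(4) ij by blast
  define l where "l = S n p a t / S n p t t"
  define c where "c i = a i - l * t i" for i
  have "S n p c t = 0" unfolding c_def S_diff_scaled_left l_def using Stt by simp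
  moreover have "t_convex n t c"
    unfolding c_def by (intro t_convex_diff_linear T_set_imp_t_convex assms(2))
  ultimately have "S n p c b \<ge> 0"
    using t_convex_separating_line[OF _ T_set_imp_t_convex[OF assms(3)] mono assms(1)]
      S_nonneg_if_aligned_with_line[OF P assms(4)] by metis
  then show ?thesis unfolding c_def S_diff_scaled_left l_def by (simp add: S_commute)
qed

end
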